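(* Let $H\in(\tfrac12,1)$, $\sigma>0$. (1) For all integers $1\le i\le n-1<N$, $$\sigma c_H (n-1)^{H-\frac12}I_n(i)\le j_n^H(i)\le \sigma c_H\, n^{H-\frac12}I_n(i),$$ where $I_n(i)=\int_{i-1}^i x^{\frac12-H}\phi_n^H(x)dx$ and $\phi_n^H(x)=(n-x)^{H-\frac12}-(n-1-x)^{H-\frac12}$. (2) For all integers $1<n\le N$, $$g_H\le g_n^H\le g_H\Big(1+\frac1{n-1}\Big)^{H-\frac12}.$$
   Context: $c_H=\sqrt{\frac{2H\,\Gamma(\frac32-H)}{\Gamma(H+\frac12)\Gamma(2-2H)}}$, $C_H=c_H(H-\frac12)$, $g_H=\frac{\sigma c_H}{H+\frac12}$, $j_n^H(i)=\sigma C_H\int_{i-1}^i x^{\frac12-H}\Big(\int_0^1(v+n-1)^{H-\frac12}(v+n-1-x)^{H-\frac32}dv\Big)dx$, $g_n^H=\sigma C_H\int_{n-1}^n x^{\frac12-H}(n-x)^{H-\frac12}\Big(\int_0^1(y(n-x)+x)^{H-\frac12}y^{H-\frac32}dy\Big)dx$. *)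

theory Defs
  imports "HOL-Analysis.Analysis"
begin

definition cH :: "real \<Rightarrow> real" where
  "cH H = sqrt ((2 * H * Gamma (3/2 - H)) / (Gamma (H + 1/2) * Gamma (2 - 2 * H)))"

definition CH :: "real \<Rightarrow> real" where
  "CH H = cH H * (H - 1/2)"

definition gH :: "real \<Rightarrow> real \<Rightarrow> real" where
  "gH H \<sigma> = \<sigma> * cH H / (H + 1/2)"

definition jnH :: "real \<Rightarrow> real \<Rightarrow> nat \<Rightarrow> nat \<Rightarrow> real" where
  "jnH H \<sigma> n i = \<sigma> * CH H *
     integral {real i - 1 .. real i}
       (\<lambda>x. x powr (1/2 - H) *
          integral {0..1} (\<lambda>v. (v + real n - 1) powr (H - 1/2) * (v + real n - 1 - x) powr (H - 3/2)))"

definition gnH :: "real \<Rightarrow> real \<Rightarrow> nat \<Rightarrow> real" where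
  "gnH H \<sigma> n = \<sigma> * CH H *
     integral {real n - 1 .. real n}
       (\<lambda>x. x powr (1/2 - H) * (real n - x) powr (H - 1/2) *
          integral {0..1} (\<lambda>y. (y * (real n - x) + x) powr (H - 1/2) * y powr (H - 3/2)))"

definition phinH :: "real \<Rightarrow> nat \<Rightarrow> real \<Rightarrow> real" where
  "phinH H n x = (real n - x) powr (H - 1/2) - (real n - 1 - x) powr (H - 1/2)"

definition InH :: "real \<Rightarrow> nat \<Rightarrow> nat \<Rightarrow> real" where
  "InH H n i = integral {real i - 1 .. real i} (\<lambda>x. x powr (1/2 - H) * phinH H n x)"

end

theory Submission imports Defs begin

text \<open>With \<open>a = H - 1/2\<close>, both kernels are integrals over \<open>[0,1]\<close> of a bounded factor times a
  weight whose integral is explicit: \<open>(v + n - 1 - x) powr (a - 1)\<close> integrates to \<open>\<phi>\<^sub>n(x)/a\<close>, and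
  \<open>y powr (a - 1)\<close> to \<open>1/a\<close>. Bounding the factor by its values at the endpoints sandwiches each
  kernel; since \<open>C\<^sub>H = a c\<^sub>H\<close> the factor \<open>a\<close> cancels, and integrating the sandwich in \<open>x\<close>
  (for \<open>g\<^sub>n\<close> against \<open>(n - x) powr a\<close>, whose integral is \<open>1/(a+1)\<close>) gives both claims.
  Integrability of the kernels in \<open>x\<close> comes from their monotonicity.\<close>

lemma measurable_ident_lebesgue_on [measurable]:
  "(\<lambda>x::'a::euclidean_space. x) \<in> borel_measurable (lebesgue_on S)"
  by (simp add: measurable_completion measurable_restrict_space1)

lemma integral_sandwich:
  fixes f l u :: "'a::euclidean_space \<Rightarrow> real"
  assumes S: "S \<in> sets lebesgue" and f: "f \<in> borel_measurable (lebesgue_on S)"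
    and l: "l integrable_on S" and u: "u integrable_on S"
    and between: "\<And>x. x \<in> S \<Longrightarrow> l x \<le> f x \<and> f x \<le> u x"
  shows "f integrable_on S" and "integral S l \<le> integral S f" and "integral S f \<le> integral S u"
proof -
  have "(\<lambda>x. f x - l x) integrable_on S"
  proof (rule measurable_bounded_by_integrable_imp_integrable_real[OF _ _ _ S])
    show "(\<lambda>x. f x - l x) \<in> borel_measurable (lebesgue_on S)"
      using f integrable_imp_measurable[OF l] by measurable
    show "(\<lambda>x. u x - l x) integrable_on S"
      using u l by (rule integrable_diff)
  qed (use between in fastforce)
  from integrable_add[OF this l] show fi: "f integrable_on S" by simp
  show "integral S l \<le> integral S f" and "integral S f \<le> integral S u"
    using between by (auto intro!: integral_le fi l u)
qed

lemma integral_le_except_negligible: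
  fixes f g :: "'a::euclidean_space \<Rightarrow> real"
  assumes f: "f integrable_on S" and g: "g integrable_on S" and T: "negligible T"
    and le: "\<And>x. x \<in> S - T \<Longrightarrow> f x \<le> g x"
  shows "integral S f \<le> integral S g"
proof -
  define f' where "f' x = (if x \<in> T then g x else f x)" for x
  have "integral S f = integral S f'"
    by (rule integral_spike[OF T]) (simp add: f'_def)
  also have "\<dots> \<le> integral S g"
  proof (rule integral_le)
    show "f' integrable_on S"
      by (rule integrable_spike[OF f T]) (simp add: f'_def)
  qed (use g le in \<open>auto simp: f'_def\<close>)
  finally show ?thesis .
qed

lemma has_integral_powr_shift:
  fixes a c :: real
  assumes a: "0 < a" and c: "0 \<le> c"
  shows "((\<lambda>v. (v + c) powr (a - 1)) has_integral ((c + 1) powr a - c powr a) / a) {0..1}"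
proof -
  have a1: "a - 1 > -1" using a by simp
  have h1: "((\<lambda>u. u powr (a - 1)) has_integral (c + 1) powr a / a) {0..c + 1}"
    using has_integral_powr_from_0[OF a1, of "c + 1"] c by simp
  have h0: "((\<lambda>u. u powr (a - 1)) has_integral c powr a / a) {0..c}"
    using has_integral_powr_from_0[OF a1, of c] c by simp
  have "(\<lambda>u. u powr (a - 1)) integrable_on {c..c + 1}"
    by (rule integrable_on_subinterval[OF has_integral_integrable[OF h1]]) (use c in auto)
  then obtain J where J: "((\<lambda>u. u powr (a - 1)) has_integral J) {c..c + 1}" by blast
  have "((\<lambda>u. u powr (a - 1)) has_integral c powr a / a + J) {0..c + 1}"
    by (rule has_integral_combine[OF _ _ h0 J]) (use c in auto)
  with h1 have "J = ((c + 1) powr a - c powr a) / a"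
    by (metis add_diff_cancel_left' diff_divide_distrib has_integral_unique)
  with has_integral_shift_real_ivl[OF J, of c] show ?thesis by simp
qed

lemma has_integral_powr_reflect:
  fixes a N :: real
  assumes a: "0 < a"
  shows "((\<lambda>x. (N - x) powr a) has_integral 1 / (a + 1)) {N - 1..N}"
proof -
  have "((\<lambda>u. u powr a) has_integral 1 / (a + 1)) {0..1}"
    using has_integral_powr_from_0[of a 1] a by simp
  then have "((\<lambda>x. (-x) powr a) has_integral 1 / (a + 1)) {-1..-0}"
    by (rule iffD2[OF has_integral_reflect_real])
  from has_integral_shift_real_ivl[OF this, of "-N"] show ?thesis by simp
qed

lemma cH_pos:
  assumes "1/2 < H" "H < 1"
  shows "0 < cH H"
  using assms unfolding cH_def by (auto intro!: divide_pos_pos mult_pos_pos)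

definition jn_kernel :: "real \<Rightarrow> real \<Rightarrow> real \<Rightarrow> real" where
  "jn_kernel H N x =
     integral {0..1} (\<lambda>v. (v + N - 1) powr (H - 1/2) * (v + N - 1 - x) powr (H - 3/2))"

definition gn_kernel :: "real \<Rightarrow> real \<Rightarrow> real \<Rightarrow> real" where
  "gn_kernel H N x = integral {0..1} (\<lambda>y. (y * (N - x) + x) powr (H - 1/2) * y powr (H - 3/2))"

lemma jn_kernel_integrable_and_bounds:
  fixes H N x :: real
  assumes H: "1/2 < H" and x: "0 \<le> x" "x \<le> N - 1"
  defines "phi \<equiv> (N - x) powr (H - 1/2) - (N - 1 - x) powr (H - 1/2)"
  shows "(\<lambda>v. (v + N - 1) powr (H - 1/2) * (v + N - 1 - x) powr (H - 3/2)) integrable_on {0..1}"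
    and "(N - 1) powr (H - 1/2) * (phi / (H - 1/2)) \<le> jn_kernel H N x"
    and "jn_kernel H N x \<le> N powr (H - 1/2) * (phi / (H - 1/2))"
proof -
  define w where "w v = (v + N - 1 - x) powr (H - 3/2)" for v
  have "(\<lambda>v. (v + (N - 1 - x)) powr ((H - 1/2) - 1)) = w"
    by (rule ext) (simp add: w_def algebra_simps)
  with has_integral_powr_shift[of "H - 1/2" "N - 1 - x"] H x
  have w: "(w has_integral phi / (H - 1/2)) {0..1}"
    by (simp add: phi_def)
  have between: "(N - 1) powr (H - 1/2) * w v \<le> (v + N - 1) powr (H - 1/2) * w v \<and>
      (v + N - 1) powr (H - 1/2) * w v \<le> N powr (H - 1/2) * w v" if "v \<in> {0..1}" for v
    using that H x by (auto intro!: mult_right_mono powr_mono2 simp: w_def)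
  have [measurable]: "w \<in> borel_measurable (lebesgue_on {0..1})"
    unfolding w_def by measurable
  have li: "(\<lambda>v. c * w v) integrable_on {0..1}" for c
    using integrable_on_cmult_left[OF has_integral_integrable[OF w], of c] by simp
  have lw: "integral {0..1} (\<lambda>v. c * w v) = c * (phi / (H - 1/2))" for c
    using w by (simp add: integral_unique)
  note sandwich = integral_sandwich[where S = "{0..1}", OF _ _ li li between]
  show "(\<lambda>v. (v + N - 1) powr (H - 1/2) * (v + N - 1 - x) powr (H - 3/2)) integrable_on {0..1}"
    using sandwich(1) by (simp add: w_def)
  show "(N - 1) powr (H - 1/2) * (phi / (H - 1/2)) \<le> jn_kernel H N x"
    using sandwich(2) lw by (simp add: jn_kernel_def w_def)
  show "jn_kernel H N x \<le> N powr (H - 1/2) * (phi / (H - 1/2))"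
    using sandwich(3) lw by (simp add: jn_kernel_def w_def)
qed

lemma jn_kernel_mono:
  fixes H N x y :: real
  assumes H: "1/2 < H" "H \<le> 3/2" and xy: "0 \<le> x" "x \<le> y" "y \<le> N - 1"
  shows "jn_kernel H N x \<le> jn_kernel H N y"
  unfolding jn_kernel_def
  \<comment> \<open>The point \<open>v = 0\<close> is excluded: for \<open>y = N - 1\<close> the right integrand there is \<open>0 powr (H - 3/2) = 0\<close>.\<close>
proof (rule integral_le_except_negligible[where T = "{0}"])
  show "(\<lambda>v. (v + N - 1) powr (H - 1/2) * (v + N - 1 - x) powr (H - 3/2)) integrable_on {0..1}"
    and "(\<lambda>v. (v + N - 1) powr (H - 1/2) * (v + N - 1 - y) powr (H - 3/2)) integrable_on {0..1}"
    using jn_kernel_integrable_and_bounds(1) H xy by auto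
  fix v :: real assume "v \<in> {0..1} - {0}"
  then have "(v + N - 1 - x) powr (H - 3/2) \<le> (v + N - 1 - y) powr (H - 3/2)"
    using H xy by (intro powr_mono2') auto
  then show "(v + N - 1) powr (H - 1/2) * (v + N - 1 - x) powr (H - 3/2)
      \<le> (v + N - 1) powr (H - 1/2) * (v + N - 1 - y) powr (H - 3/2)"
    by (simp add: mult_left_mono)
qed simp

lemma gn_kernel_integrable_and_bounds:
  fixes H N x :: real
  assumes H: "1/2 < H" and x: "0 \<le> x" "x \<le> N"
  shows "(\<lambda>y. (y * (N - x) + x) powr (H - 1/2) * y powr (H - 3/2)) integrable_on {0..1}"
    and "x powr (H - 1/2) / (H - 1/2) \<le> gn_kernel H N x"
    and "gn_kernel H N x \<le> N powr (H - 1/2) / (H - 1/2)"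
proof -
  have w: "((\<lambda>y. y powr (H - 3/2)) has_integral 1 / (H - 1/2)) {0..1}"
    using has_integral_powr_from_0[of "H - 3/2" 1] H by simp
  have between: "x powr (H - 1/2) * y powr (H - 3/2) \<le> (y * (N - x) + x) powr (H - 1/2) * y powr (H - 3/2) \<and>
      (y * (N - x) + x) powr (H - 1/2) * y powr (H - 3/2) \<le> N powr (H - 1/2) * y powr (H - 3/2)"
    if y: "y \<in> {0..1}" for y
  proof -
    have "y * (N - x) \<le> 1 * (N - x)"
      using y x by (intro mult_right_mono) auto
    then show ?thesis
      using H x y by (auto intro!: mult_right_mono powr_mono2)
  qed
  have li: "(\<lambda>y. c * y powr (H - 3/2)) integrable_on {0..1}" for c
    using integrable_on_cmult_left[OF has_integral_integrable[OF w], of c] by simp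
  have lw: "integral {0..1} (\<lambda>y. c * y powr (H - 3/2)) = c / (H - 1/2)" for c
    using w by (simp add: integral_unique)
  note sandwich = integral_sandwich[where S = "{0..1}", OF _ _ li li between]
  show "(\<lambda>y. (y * (N - x) + x) powr (H - 1/2) * y powr (H - 3/2)) integrable_on {0..1}"
    using sandwich(1) by simp
  show "x powr (H - 1/2) / (H - 1/2) \<le> gn_kernel H N x"
    using sandwich(2) lw by (simp add: gn_kernel_def)
  show "gn_kernel H N x \<le> N powr (H - 1/2) / (H - 1/2)"
    using sandwich(3) lw by (simp add: gn_kernel_def)
qed

lemma gn_kernel_mono:
  fixes H N x x' :: real
  assumes H: "1/2 < H" and x: "0 \<le> x" "x \<le> x'" "x' \<le> N"
  shows "gn_kernel H N x \<le> gn_kernel H N x'"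
  unfolding gn_kernel_def
proof (rule integral_le)
  show "(\<lambda>y. (y * (N - x) + x) powr (H - 1/2) * y powr (H - 3/2)) integrable_on {0..1}"
    and "(\<lambda>y. (y * (N - x') + x') powr (H - 1/2) * y powr (H - 3/2)) integrable_on {0..1}"
    using gn_kernel_integrable_and_bounds(1) H x by auto
  fix y :: real assume y: "y \<in> {0..1}"
  have "(1 - y) * x \<le> (1 - y) * x'"
    using x y by (intro mult_left_mono) auto
  moreover have "0 \<le> y * (N - x)"
    using x y by simp
  ultimately have "(y * (N - x) + x) powr (H - 1/2) \<le> (y * (N - x') + x') powr (H - 1/2)"
    using H x by (intro powr_mono2) (auto simp: algebra_simps)
  then show "(y * (N - x) + x) powr (H - 1/2) * y powr (H - 3/2)
      \<le> (y * (N - x') + x') powr (H - 1/2) * y powr (H - 3/2)"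
    by (simp add: mult_right_mono)
qed

lemma CH_nonneg:
  assumes "1/2 < H" "H < 1"
  shows "0 \<le> CH H"
  using cH_pos[OF assms] assms by (simp add: CH_def)

lemma jnH_bounds:
  fixes H \<sigma> :: real and n i :: nat
  assumes H: "1/2 < H" "H < 1" and \<sigma>: "0 \<le> \<sigma>" and i: "1 \<le> i" "i + 1 \<le> n"
  shows "\<sigma> * cH H * (real n - 1) powr (H - 1/2) * InH H n i \<le> jnH H \<sigma> n i"
    and "jnH H \<sigma> n i \<le> \<sigma> * cH H * real n powr (H - 1/2) * InH H n i"
proof -
  define a where "a = H - 1/2"
  define S where "S = {real i - 1..real i}"
  define w where "w x = x powr (1/2 - H)" for x :: real
  define phi where "phi = phinH H n"
  define F where "F = jn_kernel H (real n)"
  have a: "0 < a" using H by (simp add: a_def)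
  have S: "0 \<le> x \<and> x \<le> real n - 1" if "x \<in> S" for x
    using that i by (auto simp: S_def)
  have "w integrable_on {0..real i}"
    unfolding w_def using H by (intro integrable_on_powr_from_0) auto
  then have w: "w integrable_on S"
    unfolding S_def by (rule integrable_on_subinterval) (use i in auto)
  have phi: "0 \<le> phi x \<and> phi x \<le> real n powr a" if "x \<in> S" for x
  proof -
    have "(real n - 1 - x) powr a \<le> (real n - x) powr a" "(real n - x) powr a \<le> real n powr a"
      using a S[OF that] by (auto intro!: powr_mono2)
    then show ?thesis
      using powr_ge_zero[of "real n - 1 - x" a] unfolding phi_def phinH_def a_def by linarith
  qed
  have F: "(real n - 1) powr a * (phi x / a) \<le> F x \<and> F x \<le> real n powr a * (phi x / a)"
    if "x \<in> S" for x
    using jn_kernel_integrable_and_bounds(2,3)[of H x "real n"] H S[OF that]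
    by (simp add: F_def phi_def phinH_def a_def)
  have "mono_on S F"
    using H S by (auto intro!: mono_onI jn_kernel_mono simp: F_def)
  then have [measurable]: "F \<in> borel_measurable (lebesgue_on S)"
    unfolding S_def by (intro integrable_imp_measurable integrable_on_mono_on)
  have [measurable]: "w \<in> borel_measurable (lebesgue_on S)"
    unfolding w_def by measurable
  have [measurable]: "phi \<in> borel_measurable (lebesgue_on S)"
    unfolding phi_def phinH_def by measurable
  have wphi0: "(\<lambda>x. w x * phi x) integrable_on S"
  proof (rule integral_sandwich(1)[where l = "\<lambda>_. 0" and u = "\<lambda>x. real n powr a * w x"])
    show "(\<lambda>x. real n powr a * w x) integrable_on S"
      using integrable_on_cmult_left[OF w] by simp
    show "0 \<le> w x * phi x \<and> w x * phi x \<le> real n powr a * w x" if "x \<in> S" for x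
      using phi[OF that] mult_right_mono[of "phi x" "real n powr a" "w x"] by (simp add: w_def mult.commute)
    show "(\<lambda>x. w x * phi x) \<in> borel_measurable (lebesgue_on S)"
      by measurable
  qed (simp_all add: S_def integrable_0)
  have wphi: "(\<lambda>x. c * (w x * phi x)) integrable_on S" for c
    using integrable_on_cmult_left[OF wphi0, of c] by simp
  have "InH H n i = integral S (\<lambda>x. w x * phi x)"
    by (simp add: InH_def S_def w_def phi_def)
  then have I: "integral S (\<lambda>x. c * (w x * phi x)) = c * InH H n i" for c
    by simp
  have between: "(real n - 1) powr a / a * (w x * phi x) \<le> w x * F x \<and>
      w x * F x \<le> real n powr a / a * (w x * phi x)" if "x \<in> S" for x
  proof -
    have "0 \<le> w x" by (simp add: w_def)
    with F[OF that] have "w x * ((real n - 1) powr a * (phi x / a)) \<le> w x * F x"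
      and "w x * F x \<le> w x * (real n powr a * (phi x / a))"
      by (intro mult_left_mono; simp)+
    then show ?thesis
      by (simp add: ac_simps)
  qed
  have "S \<in> sets lebesgue" "(\<lambda>x. w x * F x) \<in> borel_measurable (lebesgue_on S)"
    by (simp add: S_def, measurable)
  note sandwich = integral_sandwich[OF this wphi wphi between]
  have jn: "jnH H \<sigma> n i = \<sigma> * CH H * integral S (\<lambda>x. w x * F x)"
    by (simp add: jnH_def S_def w_def F_def jn_kernel_def)
  have CH: "CH H = cH H * a"
    by (simp add: CH_def a_def)
  have nonneg: "0 \<le> \<sigma> * CH H"
    using CH_nonneg[OF H] \<sigma> by simp
  have "\<sigma> * CH H * ((real n - 1) powr a / a * InH H n i) \<le> jnH H \<sigma> n i"
    and "jnH H \<sigma> n i \<le> \<sigma> * CH H * (real n powr a / a * InH H n i)"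
    unfolding jn using mult_left_mono[OF sandwich(2) nonneg] mult_left_mono[OF sandwich(3) nonneg]
    by (simp_all only: I)
  then show "\<sigma> * cH H * (real n - 1) powr (H - 1/2) * InH H n i \<le> jnH H \<sigma> n i"
    and "jnH H \<sigma> n i \<le> \<sigma> * cH H * real n powr (H - 1/2) * InH H n i"
    using a by (simp_all add: CH a_def)
qed

lemma gnH_bounds:
  fixes H \<sigma> :: real and n :: nat
  assumes H: "1/2 < H" "H < 1" and \<sigma>: "0 \<le> \<sigma>" and n: "2 \<le> n"
  shows "gH H \<sigma> \<le> gnH H \<sigma> n"
    and "gnH H \<sigma> n \<le> gH H \<sigma> * (1 + 1 / (real n - 1)) powr (H - 1/2)"
proof -
  define a where "a = H - 1/2"
  define N where "N = real n"
  define S where "S = {N - 1..N}"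
  define K where "K = gn_kernel H N"
  define R where "R = (N - 1) powr (-a) * N powr a"
  have a: "0 < a" using H by (simp add: a_def)
  have S: "1 \<le> x \<and> N - 1 \<le> x \<and> x \<le> N" if "x \<in> S" for x
    using that n by (auto simp: S_def N_def)
  have K: "x powr a / a \<le> K x \<and> K x \<le> N powr a / a" if "x \<in> S" for x
    using gn_kernel_integrable_and_bounds(2,3)[of H x N] H S[OF that] by (simp add: K_def a_def)
  have "mono_on S K"
    using H by (auto intro!: mono_onI gn_kernel_mono simp: K_def dest: S)
  then have [measurable]: "K \<in> borel_measurable (lebesgue_on S)"
    unfolding S_def by (intro integrable_imp_measurable integrable_on_mono_on)
  have q: "((\<lambda>x. (N - x) powr a) has_integral 1 / (a + 1)) S"
    unfolding S_def using has_integral_powr_reflect[OF a] .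
  have qi: "(\<lambda>x. c * (N - x) powr a) integrable_on S" for c
    using integrable_on_cmult_left[OF has_integral_integrable[OF q], of c] by simp
  have Q: "integral S (\<lambda>x. c * (N - x) powr a) = c / (a + 1)" for c
    using q by (simp add: integral_unique)
  have between: "1 / a * (N - x) powr a \<le> x powr (-a) * (N - x) powr a * K x \<and>
      x powr (-a) * (N - x) powr a * K x \<le> R / a * (N - x) powr a" if "x \<in> S" for x
  proof -
    have "1 / a = x powr (-a) * (x powr a / a)"
      using S[OF that] by (simp add: powr_minus divide_inverse)
    also have "\<dots> \<le> x powr (-a) * K x"
      using K[OF that] by (intro mult_left_mono) auto
    finally have low: "1 / a \<le> x powr (-a) * K x" .
    have "x powr (-a) \<le> (N - 1) powr (-a)"
      using S[OF that] n a by (intro powr_mono2') (auto simp: N_def)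
    moreover have "0 \<le> K x"
      using K[OF that] a by (smt (verit) divide_nonneg_pos powr_ge_zero)
    ultimately have "x powr (-a) * K x \<le> (N - 1) powr (-a) * (N powr a / a)"
      using K[OF that] by (intro mult_mono) auto
    with low have "1 / a * (N - x) powr a \<le> x powr (-a) * K x * (N - x) powr a"
      and "x powr (-a) * K x * (N - x) powr a \<le> R / a * (N - x) powr a"
      by (intro mult_right_mono; simp add: R_def)+
    then show ?thesis
      by (simp add: ac_simps)
  qed
  have "S \<in> sets lebesgue"
    "(\<lambda>x. x powr (-a) * (N - x) powr a * K x) \<in> borel_measurable (lebesgue_on S)"
    by (simp add: S_def, measurable)
  note sandwich = integral_sandwich[OF this qi qi between]
  have gn: "gnH H \<sigma> n = \<sigma> * CH H * integral S (\<lambda>x. x powr (-a) * (N - x) powr a * K x)"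
    by (simp add: gnH_def S_def K_def gn_kernel_def N_def a_def)
  have nonneg: "0 \<le> \<sigma> * CH H"
    using CH_nonneg[OF H] \<sigma> by simp
  have "\<sigma> * CH H * (1 / a / (a + 1)) \<le> gnH H \<sigma> n"
    and "gnH H \<sigma> n \<le> \<sigma> * CH H * (R / a / (a + 1))"
    unfolding gn using mult_left_mono[OF sandwich(2) nonneg] mult_left_mono[OF sandwich(3) nonneg]
    by (simp_all only: Q)
  moreover have "\<sigma> * CH H * (1 / a / (a + 1)) = gH H \<sigma>"
    using a by (simp add: gH_def CH_def a_def)
  moreover have "\<sigma> * CH H * (R / a / (a + 1)) = gH H \<sigma> * R"
    using a by (simp add: gH_def CH_def a_def ac_simps)
  moreover have "R = (1 + 1 / (real n - 1)) powr (H - 1/2)"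
  proof -
    have "1 + 1 / (N - 1) = N / (N - 1)"
      using n by (simp add: N_def field_simps)
    moreover have "(N - 1) powr (-a) = 1 / (N - 1) powr a"
      by (simp add: powr_minus divide_inverse)
    ultimately show ?thesis
      using n by (simp add: R_def N_def a_def powr_divide)
  qed
  ultimately show "gH H \<sigma> \<le> gnH H \<sigma> n"
    and "gnH H \<sigma> n \<le> gH H \<sigma> * (1 + 1 / (real n - 1)) powr (H - 1/2)"
    by simp_all
qed

theorem lemma4p2:
  fixes H \<sigma> :: real and N :: nat
  assumes "1/2 < H" and "H < 1" and "\<sigma> > 0"
  shows "(\<forall>n i. 1 \<le> i \<and> i \<le> n - 1 \<and> n - 1 < N \<longrightarrow>
            \<sigma> * cH H * (real n - 1) powr (H - 1/2) * InH H n i \<le> jnH H \<sigma> n i \<and>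
            jnH H \<sigma> n i \<le> \<sigma> * cH H * (real n) powr (H - 1/2) * InH H n i)
       \<and> (\<forall>n. 1 < n \<and> n \<le> N \<longrightarrow>
            gH H \<sigma> \<le> gnH H \<sigma> n \<and>
            gnH H \<sigma> n \<le> gH H \<sigma> * (1 + 1 / (real n - 1)) powr (H - 1/2))"
proof (intro conjI allI impI; elim conjE)
  fix n i :: nat
  assume "1 \<le> i" "i \<le> n - 1"
  then have "i + 1 \<le> n" by arith
  with assms \<open>1 \<le> i\<close> jnH_bounds[of H \<sigma> i n]
  show "\<sigma> * cH H * (real n - 1) powr (H - 1/2) * InH H n i \<le> jnH H \<sigma> n i"
    and "jnH H \<sigma> n i \<le> \<sigma> * cH H * (real n) powr (H - 1/2) * InH H n i"
    by auto
next
  fix n :: nat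
  assume "1 < n"
  with assms gnH_bounds[of H \<sigma> n]
  show "gH H \<sigma> \<le> gnH H \<sigma> n"
    and "gnH H \<sigma> n \<le> gH H \<sigma> * (1 + 1 / (real n - 1)) powr (H - 1/2)"
    by auto
qed

end
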